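(* Let $R$ and $B$ be disjoint finite sets of points in the plane such that no three points of $R\cup B$ are collinear, and let $f:R\to\{2,3,4,\ldots\}$ be a function. If $2\le |B|\le \sum_{x\in R}(f(x)-2)+2$, then there exists a non-crossing geometric spanning tree $T$ on $R\cup B$ such that the set of leaves of $T$ is exactly $B$ and $2\le \deg_T(x)\le f(x)$ for every $x\in R$. Moreover, if $|B|=\sum_{x\in R}(f(x)-2)+2$, then $T$ satisfies $\deg_T(x)=f(x)$ for every $x\in R$.
   Context: The points of $R$ are called red and those of $B$ blue. A geometric spanning tree on a point set $P$ is a tree with vertex set $P$ whose edges are drawn as straight-line segments between their endpoints; it is non-crossing if no two edges intersect except at a common endpoint. $\deg_T(v)$ denotes the degree of vertex $v$ in $T$, and a leaf is a vertex of degree one. *)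

theory Defs
  imports "HOL-Analysis.Analysis"
begin

type_synonym point = "real^2"

definition graph_on :: "'a set \<Rightarrow> 'a set set \<Rightarrow> bool" where
  "graph_on V E \<longleftrightarrow> (\<forall>e\<in>E. \<exists>u v. e = {u, v} \<and> u \<noteq> v \<and> u \<in> V \<and> v \<in> V)"

definition adj :: "'a set set \<Rightarrow> 'a \<Rightarrow> 'a \<Rightarrow> bool" where
  "adj E u v \<longleftrightarrow> {u, v} \<in> E \<and> u \<noteq> v"

definition connected_graph :: "'a set \<Rightarrow> 'a set set \<Rightarrow> bool" where
  "connected_graph V E \<longleftrightarrow> (\<forall>u\<in>V. \<forall>v\<in>V. (adj E)\<^sup>*\<^sup>* u v)"

definition is_cycle :: "'a set set \<Rightarrow> 'a list \<Rightarrow> bool" where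
  "is_cycle E xs \<longleftrightarrow> length xs \<ge> 3 \<and> distinct xs \<and>
     (\<forall>i. Suc i < length xs \<longrightarrow> adj E (xs ! i) (xs ! Suc i)) \<and>
     adj E (last xs) (hd xs)"

definition acyclic_graph :: "'a set set \<Rightarrow> bool" where
  "acyclic_graph E \<longleftrightarrow> (\<nexists>xs. is_cycle E xs)"

definition is_tree :: "'a set \<Rightarrow> 'a set set \<Rightarrow> bool" where
  "is_tree V E \<longleftrightarrow> graph_on V E \<and> connected_graph V E \<and> acyclic_graph E"

definition degree :: "'a set set \<Rightarrow> 'a \<Rightarrow> nat" where
  "degree E v = card {e\<in>E. v \<in> e}"

definition non_crossing :: "point set set \<Rightarrow> bool" where
  "non_crossing E \<longleftrightarrow> (\<forall>e1\<in>E. \<forall>e2\<in>E. e1 \<noteq> e2 \<longrightarrow> convex hull e1 \<inter> convex hull e2 \<subseteq> e1 \<inter> e2)"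

definition general_position :: "point set \<Rightarrow> bool" where
  "general_position P \<longleftrightarrow> (\<forall>S\<subseteq>P. card S = 3 \<longrightarrow> \<not> collinear S)"

end

theory Submission
  imports Defs
begin

text \<open>
  Give each red point x the degree g x + 2, where 0 \<le> g x \<le> f x - 2 and the g x add up to
  |B| - 2, and each blue point the degree 1. These degrees are positive and sum to
  2 (|R \<union> B| - 1), so it suffices that every degree sequence of a tree is realised by a
  non-crossing spanning tree on any point set in general position.

  Let u be the lowest point (lexicographically) and order the other
  points by angle around u; along this order the partial sums of 2 - t x grow by at most 1
  per point. If t u \<ge> 2, cut the order where the partial sum is 1: the two halves, each
  together with u (which gets degrees 1 and t u - 1), are again degree sequences of trees and
  lie on opposite sides of a line through u. If t u = 1, let q be the point following the last
  prefix with partial sum at least 1: u becomes a leaf hanging at q, and the points before and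
  after q, on opposite sides of the line u q, share the remaining degree of q. Trees on
  opposite sides of a line through their only common vertex do not cross, and their union is a
  tree.
\<close>

section \<open>Cyclic indices, prefix sums and sorting\<close>

lemma all_mod_successor_iff:
  assumes "0 < n"
  shows "(\<forall>i<n. Q i (Suc i mod n)) \<longleftrightarrow> (\<forall>i. Suc i < n \<longrightarrow> Q i (Suc i)) \<and> Q (n - 1) 0"
  using assms by (smt (verit) Suc_diff_1 Suc_lessD Suc_lessI diff_Suc_1 diff_less
      less_numeral_extra(1) mod_Suc mod_if)

lemma cyclic_invariant:
  assumes "p < n" "P p" and step: "\<And>i. i < n \<Longrightarrow> P i \<Longrightarrow> Suc i mod n \<noteq> p \<Longrightarrow> P (Suc i mod n)"
  shows "i < n \<Longrightarrow> P i"
proof -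
  have from_p: "P ((p + k) mod n)" if "k < n" for k
    using that
  proof (induction k)
    case 0
    then show ?case using assms(1,2) by simp
  next
    case (Suc k)
    have "(p + Suc k) mod n \<noteq> p"
      using \<open>p < n\<close> Suc.prems by (cases "p + Suc k < n") (auto simp: mod_if)
    then show ?case
      using step[of "(p + k) mod n"] Suc by (simp add: mod_Suc_eq)
  qed
  assume "i < n"
  then have "(p + (i + n - p)) mod n = i" using \<open>p < n\<close> by simp
  then show "P i"
    using from_p[of "(i + n - p) mod n"] \<open>p < n\<close> by (simp add: mod_add_right_eq)
qed

lemma int_upward_steps_hit:
  fixes f :: "nat \<Rightarrow> int"
  assumes "f 0 \<le> k" "k \<le> f n" "\<And>i. i < n \<Longrightarrow> f (Suc i) \<le> f i + 1"
  shows "\<exists>i\<le>n. f i = k"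
  using assms
proof (induction n)
  case (Suc n)
  show ?case
  proof (cases "k \<le> f n")
    case True
    then show ?thesis using Suc by (metis le_SucI less_SucI)
  next
    case False
    then have "f (Suc n) = k" using Suc.prems(2) Suc.prems(3)[of n] by simp
    then show ?thesis by blast
  qed
qed auto

lemma last_positive_prefix:
  fixes f :: "nat \<Rightarrow> int"
  assumes "0 < m"
  obtains k where "k < m" "k = 0 \<or> 1 \<le> f k" "Suc k = m \<or> f (Suc k) \<le> 0"
proof -
  define K where "K = {k. k < m \<and> (k = 0 \<or> 1 \<le> f k)}"
  have K: "finite K" "0 \<in> K" unfolding K_def using assms by auto
  define k where "k = Max K"
  have "k \<in> K" unfolding k_def using K by (intro Max_in) auto
  then have k: "k < m" "k = 0 \<or> 1 \<le> f k" unfolding K_def by auto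
  have "f (Suc k) \<le> 0" if "Suc k < m"
  proof (rule ccontr)
    assume "\<not> f (Suc k) \<le> 0"
    then have "Suc k \<in> K" unfolding K_def using that by auto
    then show False using Max_ge[OF K(1)] unfolding k_def[symmetric] by fastforce
  qed
  then show ?thesis using that k by (metis Suc_lessI)
qed

lemma sum_list_take_Suc:
  "k < length xs \<Longrightarrow> (\<Sum>x\<leftarrow>take (Suc k) xs. f x) = (\<Sum>x\<leftarrow>take k xs. f x) + f (xs ! k)"
  by (simp add: take_Suc_conv_app_nth)

lemma sum_list_drop:
  fixes f :: "'a \<Rightarrow> 'b :: ab_group_add"
  shows "(\<Sum>x\<leftarrow>drop k xs. f x) = (\<Sum>x\<leftarrow>xs. f x) - (\<Sum>x\<leftarrow>take k xs. f x)"
  by (metis add_diff_cancel_left' append_take_drop_id map_append sum_list_append)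

lemma exists_le_sum_eq:
  fixes f :: "'a \<Rightarrow> nat"
  assumes "finite A" "k \<le> sum f A"
  obtains g where "\<forall>x\<in>A. g x \<le> f x" "sum g A = k"
  using assms
proof (induction A arbitrary: k thesis rule: finite_induct)
  case empty
  then show ?case by simp
next
  case (insert a A)
  obtain g where g: "\<forall>x\<in>A. g x \<le> f x" "sum g A = min k (sum f A)"
    using insert.IH[of "min k (sum f A)"] by auto
  have "k - min k (sum f A) \<le> f a" using insert.prems(2) insert.hyps by simp
  moreover have "sum (g(a := k - min k (sum f A))) A = sum g A"
    using insert.hyps(2) by (intro sum.cong) auto
  ultimately show ?case
    using insert.prems(1)[of "g(a := k - min k (sum f A))"] g insert.hyps by auto
qed

lemma strict_total_order_sorted_list:
  assumes "finite Q"
    "\<And>a b c. a \<in> Q \<Longrightarrow> b \<in> Q \<Longrightarrow> c \<in> Q \<Longrightarrow> r a b \<Longrightarrow> r b c \<Longrightarrow> r a c"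
    "\<And>a b. a \<in> Q \<Longrightarrow> b \<in> Q \<Longrightarrow> a \<noteq> b \<Longrightarrow> r a b \<or> r b a"
    "\<And>a. a \<in> Q \<Longrightarrow> \<not> r a a"
  obtains xs where "set xs = Q" "sorted_wrt r xs"
  using assms
proof (induction Q arbitrary: thesis rule: finite_induct)
  case empty
  then show ?case by simp
next
  case (insert x F)
  have F: "\<And>a b c. a \<in> F \<Longrightarrow> b \<in> F \<Longrightarrow> c \<in> F \<Longrightarrow> r a b \<Longrightarrow> r b c \<Longrightarrow> r a c"
    "\<And>a b. a \<in> F \<Longrightarrow> b \<in> F \<Longrightarrow> a \<noteq> b \<Longrightarrow> r a b \<or> r b a"
    "\<And>a. a \<in> F \<Longrightarrow> \<not> r a a"
    using insert.prems(2-4) by blast+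
  obtain xs where xs: "set xs = F" "sorted_wrt r xs"
    by (rule insert.IH[OF _ F(1) F(2) F(3)])
  define ys where "ys = filter (\<lambda>y. r y x) xs @ x # filter (\<lambda>y. r x y) xs"
  have "r y x \<or> r x y" if "y \<in> F" for y
    using insert.prems(3)[of y x] insert.hyps(2) that by blast
  then have "set ys = insert x F"
    unfolding ys_def using xs(1) by auto
  moreover have "sorted_wrt r ys"
  proof -
    have "r a c" if "a \<in> F" "c \<in> F" "r a x" "r x c" for a c
      using insert.prems(2) that by blast
    then show ?thesis
      unfolding ys_def using xs by (simp add: sorted_wrt_append sorted_wrt_filter)
  qed
  ultimately show ?case using insert.prems(1) by blast
qed

lemma sorted_wrt_irrefl_distinct: "sorted_wrt r xs \<Longrightarrow> \<forall>x\<in>set xs. \<not> r x x \<Longrightarrow> distinct xs"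
  by (induction xs) auto

section \<open>Gluing trees at a vertex\<close>

lemma graph_on_edge:
  assumes "graph_on V E" "e \<in> E"
  obtains a b where "e = {a, b}" "a \<noteq> b" "a \<in> V" "b \<in> V"
  using assms unfolding graph_on_def by blast

lemma graph_on_edge_subset: "graph_on V E \<Longrightarrow> e \<in> E \<Longrightarrow> e \<subseteq> V"
  by (metis empty_subsetI graph_on_edge insert_subset)

lemma finite_edges: "finite V \<Longrightarrow> graph_on V E \<Longrightarrow> finite E"
  by (meson Pow_iff finite_Pow_iff finite_subset graph_on_edge_subset subsetI)

lemma is_cycle_iff:
  "is_cycle E xs \<longleftrightarrow> 3 \<le> length xs \<and> distinct xs \<and>
     (\<forall>i<length xs. adj E (xs ! i) (xs ! (Suc i mod length xs)))"
proof (cases "3 \<le> length xs")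
  case True
  then have "xs \<noteq> []" by auto
  then have "0 < length xs" "last xs = xs ! (length xs - 1)" "hd xs = xs ! 0"
    by (auto simp: last_conv_nth hd_conv_nth)
  then show ?thesis
    unfolding is_cycle_def using all_mod_successor_iff[of "length xs" "\<lambda>i j. adj E (xs ! i) (xs ! j)"]
    by simp
qed (simp add: is_cycle_def)

lemma cycle_vertices: "is_cycle E xs \<Longrightarrow> graph_on V E \<Longrightarrow> set xs \<subseteq> V"
  unfolding is_cycle_iff adj_def
  by (smt (verit) graph_on_edge_subset in_set_conv_nth insert_subset subsetI)

lemma adj_mono: "T \<subseteq> T' \<Longrightarrow> adj T u v \<Longrightarrow> adj T' u v"
  unfolding adj_def by blast

text \<open>
  Along the cycle, an edge of T1 can only be followed by an edge of T2 at a vertex of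
  Y \<inter> Z, that is at c = xs ! p; so the edges met from position p onwards stay in T1.
\<close>

lemma cycle_within_side:
  assumes cyc: "is_cycle (T1 \<union> T2) xs" and g1: "graph_on Y T1" and g2: "graph_on Z T2"
    and YZ: "Y \<inter> Z \<subseteq> {c}" and p: "p < length xs" "c \<in> set xs \<Longrightarrow> xs ! p = c"
    and start: "{xs ! p, xs ! (Suc p mod length xs)} \<in> T1"
  shows "is_cycle T1 xs"
proof -
  let ?n = "length xs"
  define E where "E i = {xs ! i, xs ! (Suc i mod ?n)}" for i
  have dist: "distinct xs" and adj: "\<forall>i<?n. adj (T1 \<union> T2) (xs ! i) (xs ! (Suc i mod ?n))"
    using cyc unfolding is_cycle_iff by auto
  have "E i \<in> T1" if "i < ?n" for i
  proof (rule cyclic_invariant[where P = "\<lambda>i. E i \<in> T1", OF p(1) _ _ that])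
    show "E p \<in> T1" using start unfolding E_def .
  next
    fix i assume i: "i < ?n" and "E i \<in> T1" and ne: "Suc i mod ?n \<noteq> p"
    let ?j = "Suc i mod ?n"
    have "0 < ?n" using i by linarith
    then have j: "?j < ?n" by simp
    show "E ?j \<in> T1"
    proof (rule ccontr)
      assume "E ?j \<notin> T1"
      then have "E ?j \<in> T2" using adj j unfolding E_def adj_def by blast
      then have "xs ! ?j \<in> Z" using graph_on_edge_subset[OF g2] unfolding E_def by blast
      moreover have "xs ! ?j \<in> Y" using graph_on_edge_subset[OF g1 \<open>E i \<in> T1\<close>] unfolding E_def by blast
      ultimately have "xs ! ?j = xs ! p" using YZ p(2) j by (metis IntI nth_mem singletonD subsetD)
      then show False using ne dist j p(1) by (simp add: nth_eq_iff_index_eq)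
    qed
  qed
  then show ?thesis
    using cyc adj unfolding is_cycle_iff E_def adj_def by blast
qed

lemma cycle_split:
  assumes cyc: "is_cycle (T1 \<union> T2) xs" and g1: "graph_on Y T1" and g2: "graph_on Z T2"
    and YZ: "Y \<inter> Z \<subseteq> {c}"
  shows "is_cycle T1 xs \<or> is_cycle T2 xs"
proof -
  have len: "0 < length xs" using cyc unfolding is_cycle_def by auto
  obtain p where p: "p < length xs" "c \<in> set xs \<Longrightarrow> xs ! p = c"
  proof (cases "c \<in> set xs")
    case True
    then show ?thesis using that by (metis in_set_conv_nth)
  next
    case False
    then show ?thesis using that len by blast
  qed
  have "{xs ! p, xs ! (Suc p mod length xs)} \<in> T1 \<union> T2"
    using cyc p(1) unfolding is_cycle_iff adj_def by blast
  moreover have "is_cycle T2 xs" if "{xs ! p, xs ! (Suc p mod length xs)} \<in> T2"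
    using cycle_within_side[of T2 T1 xs Z Y c p] cyc g1 g2 YZ p that by (simp add: Un_commute Int_commute)
  ultimately show ?thesis using cycle_within_side[OF cyc g1 g2 YZ p] by blast
qed

lemma edges_disjoint_glue:
  assumes "graph_on Y T1" "graph_on Z T2" "Y \<inter> Z = {c}"
  shows "T1 \<inter> T2 = {}"
proof -
  have False if e1: "e \<in> T1" and e2: "e \<in> T2" for e
  proof -
    obtain a b where ab: "e = {a, b}" "a \<noteq> b" "a \<in> Y" "b \<in> Y"
      by (rule graph_on_edge[OF assms(1) e1])
    moreover have "e \<subseteq> Z" by (rule graph_on_edge_subset[OF assms(2) e2])
    ultimately have "a \<in> Y \<inter> Z" "b \<in> Y \<inter> Z" by auto
    then show False using assms(3) ab(2) by simp
  qed
  then show ?thesis by blast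
qed

lemma graph_on_Un: "graph_on Y T1 \<Longrightarrow> graph_on Z T2 \<Longrightarrow> graph_on (Y \<union> Z) (T1 \<union> T2)"
  unfolding graph_on_def by fast

lemma connected_graph_Un:
  assumes "connected_graph Y T1" "connected_graph Z T2" "c \<in> Y" "c \<in> Z"
  shows "connected_graph (Y \<union> Z) (T1 \<union> T2)"
proof -
  have mono: "(adj T)\<^sup>*\<^sup>* u v \<Longrightarrow> (adj (T1 \<union> T2))\<^sup>*\<^sup>* u v" if "T \<subseteq> T1 \<union> T2" for T u v
    using rtranclp_mono[of "adj T" "adj (T1 \<union> T2)"] adj_mono[OF that] by blast
  have "(adj (T1 \<union> T2))\<^sup>*\<^sup>* v c \<and> (adj (T1 \<union> T2))\<^sup>*\<^sup>* c v" if "v \<in> Y \<union> Z" for v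
  proof (cases "v \<in> Y")
    case True
    then show ?thesis using assms(1,3) mono[of T1] unfolding connected_graph_def by blast
  next
    case False
    then show ?thesis using that assms(2,4) mono[of T2] unfolding connected_graph_def by blast
  qed
  then show ?thesis
    unfolding connected_graph_def by (meson rtranclp_trans)
qed

lemma is_tree_glue:
  assumes t1: "is_tree Y T1" and t2: "is_tree Z T2" and YZ: "Y \<inter> Z = {c}"
  shows "is_tree (Y \<union> Z) (T1 \<union> T2)"
proof -
  have g1: "graph_on Y T1" and g2: "graph_on Z T2" using t1 t2 unfolding is_tree_def by auto
  have "\<not> is_cycle (T1 \<union> T2) xs" for xs
    using cycle_split[OF _ g1 g2, where c = c] YZ t1 t2 unfolding is_tree_def acyclic_graph_def by blast
  then show ?thesis
    using graph_on_Un[OF g1 g2] connected_graph_Un[of Y T1 Z T2 c] t1 t2 YZ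
    unfolding is_tree_def acyclic_graph_def by blast
qed

lemma is_tree_edge:
  assumes "a \<noteq> b"
  shows "is_tree {a, b} {{a, b}}"
proof -
  have g: "graph_on {a, b} {{a, b}}" using assms unfolding graph_on_def by blast
  moreover have "connected_graph {a, b} {{a, b}}"
    using assms unfolding connected_graph_def adj_def by (auto simp: insert_commute)
  moreover have "\<not> is_cycle {{a, b}} xs" for xs
  proof
    assume c: "is_cycle {{a, b}} xs"
    then have "length xs = card (set xs)" "3 \<le> length xs" unfolding is_cycle_def by (auto simp: distinct_card)
    moreover have "card (set xs) \<le> card {a, b}"
      using cycle_vertices[OF c g] by (intro card_mono) auto
    then have "card (set xs) \<le> 2" using assms by simp
    ultimately show False by simp
  qed
  ultimately show ?thesis unfolding is_tree_def acyclic_graph_def by blast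
qed

lemma is_tree_singleton: "is_tree {c} {}"
  unfolding is_tree_def graph_on_def connected_graph_def acyclic_graph_def is_cycle_def adj_def
  by auto

lemma degree_Un_disjoint:
  assumes "finite T1" "finite T2" "T1 \<inter> T2 = {}"
  shows "degree (T1 \<union> T2) x = degree T1 x + degree T2 x"
proof -
  have "{e \<in> T1 \<union> T2. x \<in> e} = {e \<in> T1. x \<in> e} \<union> {e \<in> T2. x \<in> e}" by blast
  then show ?thesis unfolding degree_def using assms by (simp add: card_Un_disjoint disjoint_iff)
qed

lemma degree_outside:
  assumes "graph_on V E" "x \<notin> V"
  shows "degree E x = 0"
proof -
  have "{e \<in> E. x \<in> e} = {}" using graph_on_edge_subset[OF assms(1)] assms(2) by blast
  then show ?thesis unfolding degree_def by (simp only: card.empty)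
qed

lemma degree_single_edge: "x \<in> {a, b} \<Longrightarrow> degree {{a, b}} x = 1"
proof -
  assume "x \<in> {a, b}"
  then have "{e \<in> {{a, b}}. x \<in> e} = {{a, b}}" by auto
  then show ?thesis unfolding degree_def by simp
qed

section \<open>Orientation in the plane\<close>

definition cross2 :: "point \<Rightarrow> point \<Rightarrow> real" where
  "cross2 a b = a$1 * b$2 - a$2 * b$1"

lemma cross2_antisym: "cross2 b a = - cross2 a b"
  unfolding cross2_def by simp

lemma cross2_self [simp]: "cross2 a a = 0"
  unfolding cross2_def by simp

lemma cross2_zero_right [simp]: "cross2 a 0 = 0"
  unfolding cross2_def by simp

lemma cross2_add_left: "cross2 (a + b) c = cross2 a c + cross2 b c"
  unfolding cross2_def by (simp add: algebra_simps)

lemma cross2_affine_right: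
  assumes "u + v = 1"
  shows "cross2 d (u *\<^sub>R x + v *\<^sub>R y - c) = u * cross2 d (x - c) + v * cross2 d (y - c)"
proof -
  have v: "v = 1 - u" using assms by simp
  show ?thesis unfolding cross2_def v by (simp add: algebra_simps)
qed

lemma cross2_shift_origin: "cross2 (q - u) (y - q) = - cross2 (y - u) (q - u)"
  unfolding cross2_def by (simp add: algebra_simps)

lemma cross2_diff_commute: "cross2 (u - q) v = - cross2 (q - u) v"
  unfolding cross2_def by (simp add: algebra_simps)

definition lex_positive :: "point \<Rightarrow> bool" where
  "lex_positive v \<longleftrightarrow> 0 < v$1 \<or> (v$1 = 0 \<and> 0 < v$2)"

lemma cross2_trans:
  assumes "lex_positive a" "lex_positive b" "lex_positive c"
    and "0 < cross2 a b" "0 < cross2 b c"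
  shows "0 < cross2 a c"
proof -
  have "cross2 a b * c$1 + cross2 b c * a$1 = cross2 a c * b$1"
    unfolding cross2_def by (simp add: algebra_simps)
  then show ?thesis
    using assms unfolding lex_positive_def cross2_def by (smt (verit) mult_nonneg_nonneg zero_less_mult_iff)
qed

lemma cross2_eq_0_collinear:
  assumes "cross2 x y = 0"
  shows "collinear {0, x, y}"
proof -
  have "\<exists>k. y = k *\<^sub>R x" if "x \<noteq> 0"
  proof (cases "x$1 = 0")
    case True
    then have "x$2 \<noteq> 0" using that by (metis exhaust_2 vec_eq_iff zero_index)
    then have "y = (y$2 / x$2) *\<^sub>R x"
      using True assms unfolding cross2_def vec_eq_iff forall_2 by (simp add: field_simps)
    then show ?thesis ..
  next
    case False
    then have "y = (y$1 / x$1) *\<^sub>R x"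
      using assms unfolding cross2_def vec_eq_iff forall_2 by (simp add: field_simps)
    then show ?thesis ..
  qed
  then show ?thesis by (auto simp: collinear_lemma)
qed

lemma general_position_cross2_nonzero:
  assumes "general_position P" "u \<in> P" "a \<in> P" "b \<in> P" "u \<noteq> a" "u \<noteq> b" "a \<noteq> b"
  shows "cross2 (a - u) (b - u) \<noteq> 0"
proof
  assume "cross2 (a - u) (b - u) = 0"
  then have "collinear {a, u, b}"
    using cross2_eq_0_collinear collinear_3[of a u b] by simp
  moreover have "card {a, u, b} = 3" using assms(5-7) by auto
  ultimately show False using assms(1-4) unfolding general_position_def by auto
qed

lemma general_position_segment_endpoint:
  assumes "general_position P" "a \<in> P" "b \<in> P" "x \<in> P" "x \<in> convex hull {a, b}"
  shows "x = a \<or> x = b"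
proof (rule ccontr)
  assume x: "\<not> (x = a \<or> x = b)"
  have "x \<in> closed_segment a b" using assms(5) by (simp add: segment_convex_hull)
  then have "collinear {a, b, x}"
    using between_mem_segment collinear_between_cases by blast
  moreover have "a \<noteq> b" using x \<open>x \<in> closed_segment a b\<close> by auto
  then have "card {a, b, x} = 3" using x by auto
  ultimately show False using assms(1-4) unfolding general_position_def by auto
qed

lemma general_position_subset: "general_position P \<Longrightarrow> Q \<subseteq> P \<Longrightarrow> general_position Q"
  unfolding general_position_def by blast

lemma convex_closed_halfplane: "convex {x. 0 \<le> cross2 d (x - c)}"
  unfolding convex_def by (simp add: cross2_affine_right)

lemma convex_open_halfplane_insert: "convex (insert c {x. cross2 d (x - c) < 0})"
  unfolding convex_def
proof (intro ballI allI impI)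
  fix x y and u v :: real
  assume x: "x \<in> insert c {x. cross2 d (x - c) < 0}" and y: "y \<in> insert c {x. cross2 d (x - c) < 0}"
    and uv: "0 \<le> u" "0 \<le> v" "u + v = 1"
  show "u *\<^sub>R x + v *\<^sub>R y \<in> insert c {x. cross2 d (x - c) < 0}"
  proof (cases "u * cross2 d (x - c) + v * cross2 d (y - c) < 0")
    case True
    then show ?thesis using cross2_affine_right[OF uv(3)] by simp
  next
    case False
    have "cross2 d (x - c) \<le> 0" "cross2 d (y - c) \<le> 0" using x y by auto
    then have "u * cross2 d (x - c) \<le> 0" "v * cross2 d (y - c) \<le> 0"
      using uv by (simp_all add: mult_nonneg_nonpos)
    then have "u * cross2 d (x - c) = 0" "v * cross2 d (y - c) = 0"
      using False by linarith+
    then have "u = 0 \<or> x = c" "v = 0 \<or> y = c" using x y by auto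
    moreover have "u *\<^sub>R c + v *\<^sub>R c = c"
      using uv(3) by (metis scaleR_add_left scaleR_one)
    ultimately have "u *\<^sub>R x + v *\<^sub>R y = c" using uv(3) by auto
    then show ?thesis by simp
  qed
qed

section \<open>Gluing plane trees across a line\<close>

lemma non_crossing_Un_separated:
  assumes gp: "general_position (Y \<union> Z)" and g1: "graph_on Y T1" and g2: "graph_on Z T2"
    and c: "c \<in> Y \<union> Z" and nc1: "non_crossing T1" and nc2: "non_crossing T2"
    and sepY: "\<forall>y\<in>Y - {c}. cross2 d (y - c) < 0" and sepZ: "\<forall>z\<in>Z. 0 \<le> cross2 d (z - c)"
  shows "non_crossing (T1 \<union> T2)"
proof -
  have cross: "convex hull e1 \<inter> convex hull e2 \<subseteq> e1 \<inter> e2" if e1: "e1 \<in> T1" and e2: "e2 \<in> T2" for e1 e2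
  proof
    fix x assume x: "x \<in> convex hull e1 \<inter> convex hull e2"
    obtain a b where ab: "e1 = {a, b}" "a \<in> Y" "b \<in> Y" by (meson graph_on_edge[OF g1 e1])
    obtain a' b' where ab': "e2 = {a', b'}" "a' \<in> Z" "b' \<in> Z" by (meson graph_on_edge[OF g2 e2])
    have "convex hull e1 \<subseteq> insert c {x. cross2 d (x - c) < 0}"
      by (rule hull_minimal) (use sepY ab convex_open_halfplane_insert in auto)
    moreover have "convex hull e2 \<subseteq> {x. 0 \<le> cross2 d (x - c)}"
      by (rule hull_minimal) (use sepZ ab' convex_closed_halfplane in auto)
    ultimately have "x \<in> insert c {x. cross2 d (x - c) < 0}" "x \<in> {x. 0 \<le> cross2 d (x - c)}"
      using x by blast+
    then have xc: "x = c" by force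
    have "c = a \<or> c = b"
      using general_position_segment_endpoint[OF gp _ _ c] ab x xc by blast
    moreover have "c = a' \<or> c = b'"
      using general_position_segment_endpoint[OF gp _ _ c] ab' x xc by blast
    ultimately show "x \<in> e1 \<inter> e2" using ab ab' xc by blast
  qed
  show ?thesis
    unfolding non_crossing_def
  proof (intro ballI impI)
    fix e1 e2 assume "e1 \<in> T1 \<union> T2" "e2 \<in> T1 \<union> T2" "e1 \<noteq> e2"
    then consider "e1 \<in> T1" "e2 \<in> T1" | "e1 \<in> T2" "e2 \<in> T2" | "e1 \<in> T1" "e2 \<in> T2" | "e1 \<in> T2" "e2 \<in> T1"
      by blast
    then show "convex hull e1 \<inter> convex hull e2 \<subseteq> e1 \<inter> e2"
    proof cases
      case 4
      then show ?thesis using cross[of e2 e1] by (simp add: Int_commute)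
    qed (use nc1 nc2 cross \<open>e1 \<noteq> e2\<close> in \<open>auto simp: non_crossing_def\<close>)
  qed
qed

definition plane_tree_with_degrees :: "point set \<Rightarrow> (point \<Rightarrow> nat) \<Rightarrow> point set set \<Rightarrow> bool" where
  "plane_tree_with_degrees P t T \<longleftrightarrow> is_tree P T \<and> non_crossing T \<and> (\<forall>x\<in>P. degree T x = t x)"

lemma plane_tree_with_degrees_edge:
  assumes "a \<noteq> b"
  shows "plane_tree_with_degrees {a, b} (\<lambda>_. 1) {{a, b}}"
proof -
  have "non_crossing {{a, b}}" unfolding non_crossing_def by simp
  moreover have "\<forall>x\<in>{a, b}. degree {{a, b}} x = 1" by (intro ballI degree_single_edge)
  ultimately show ?thesis
    unfolding plane_tree_with_degrees_def using is_tree_edge[OF assms] by blast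
qed

lemma plane_tree_with_degrees_glue:
  assumes gp: "general_position (Y \<union> Z)" and fin: "finite Y" "finite Z" and YZ: "Y \<inter> Z = {c}"
    and TY: "plane_tree_with_degrees Y tY TY" and TZ: "plane_tree_with_degrees Z tZ TZ"
    and sepY: "\<forall>y\<in>Y - {c}. cross2 d (y - c) < 0" and sepZ: "\<forall>z\<in>Z. 0 \<le> cross2 d (z - c)"
    and tY: "\<forall>x\<in>Y - {c}. t x = tY x" and tZ: "\<forall>x\<in>Z - {c}. t x = tZ x" and tc: "t c = tY c + tZ c"
  shows "plane_tree_with_degrees (Y \<union> Z) t (TY \<union> TZ)"
proof -
  have g: "graph_on Y TY" "graph_on Z TZ"
    using TY TZ unfolding plane_tree_with_degrees_def is_tree_def by auto
  have deg: "degree (TY \<union> TZ) x = degree TY x + degree TZ x" for x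
    by (rule degree_Un_disjoint[OF finite_edges[OF fin(1) g(1)] finite_edges[OF fin(2) g(2)]
      edges_disjoint_glue[OF g YZ]])
  have dY: "\<forall>x\<in>Y. degree TY x = tY x" and dZ: "\<forall>x\<in>Z. degree TZ x = tZ x"
    using TY TZ unfolding plane_tree_with_degrees_def by blast+
  have c: "c \<in> Y" "c \<in> Z" using YZ by auto
  have "degree (TY \<union> TZ) x = t x" if "x \<in> Y \<union> Z" for x
  proof (cases "x = c")
    case True
    then show ?thesis using deg dY dZ c tc by simp
  next
    case False
    show ?thesis
    proof (cases "x \<in> Y")
      case True
      then have "x \<notin> Z" using YZ False by blast
      then show ?thesis using True False deg dY tY degree_outside[OF g(2)] by simp
    next
      case False
      then have "x \<in> Z" "x \<noteq> c" using that c by auto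
      then show ?thesis using False deg dZ tZ degree_outside[OF g(1)] by simp
    qed
  qed
  moreover have "is_tree (Y \<union> Z) (TY \<union> TZ)"
    using is_tree_glue[OF _ _ YZ] TY TZ unfolding plane_tree_with_degrees_def by blast
  moreover have "non_crossing (TY \<union> TZ)"
    using non_crossing_Un_separated[OF gp g _ _ _ sepY sepZ] TY TZ YZ
    unfolding plane_tree_with_degrees_def by blast
  ultimately show ?thesis unfolding plane_tree_with_degrees_def by blast
qed

section \<open>Degree sequences of trees\<close>

definition tree_degrees :: "'a set \<Rightarrow> ('a \<Rightarrow> nat) \<Rightarrow> bool" where
  "tree_degrees P t \<longleftrightarrow> ((\<forall>x\<in>P. 1 \<le> t x) \<or> card P = 1) \<and> (\<Sum>x\<in>P. 2 - int (t x)) = 2"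

lemma tree_degrees_insert_list:
  assumes "distinct xs" "u \<notin> set xs"
  shows "tree_degrees (insert u (set xs)) (t(u := a)) \<longleftrightarrow>
    (xs = [] \<or> 1 \<le> a \<and> (\<forall>x\<in>set xs. 1 \<le> t x)) \<and> 2 - int a + (\<Sum>x\<leftarrow>xs. 2 - int (t x)) = 2"
proof -
  have card: "card (insert u (set xs)) = 1 \<longleftrightarrow> xs = []"
    using assms by (simp add: distinct_card)
  have "(\<Sum>x\<in>set xs. 2 - int ((t(u := a)) x)) = (\<Sum>x\<in>set xs. 2 - int (t x))"
    using assms(2) by (intro sum.cong) auto
  also have "\<dots> = (\<Sum>x\<leftarrow>xs. 2 - int (t x))"
    using assms(1) by (simp add: sum_list_distinct_conv_sum_set)
  finally have sum: "(\<Sum>x\<in>insert u (set xs). 2 - int ((t(u := a)) x)) = 2 - int a + (\<Sum>x\<leftarrow>xs. 2 - int (t x))"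
    using assms(2) by simp
  have pos: "(\<forall>x\<in>insert u (set xs). 1 \<le> (t(u := a)) x) \<longleftrightarrow> 1 \<le> a \<and> (\<forall>x\<in>set xs. 1 \<le> t x)"
    using assms(2) by auto
  show ?thesis
    unfolding tree_degrees_def sum pos card by auto
qed

lemma tree_degrees_split_apex:
  assumes xs: "distinct xs" "u \<notin> set xs" and P: "tree_degrees (insert u (set xs)) t"
    and tu: "2 \<le> t u"
  obtains j where "0 < j" "j < length xs"
    "tree_degrees (insert u (set (take j xs))) (t(u := 1))"
    "tree_degrees (insert u (set (drop j xs))) (t(u := t u - 1))"
proof -
  define S where "S k = (\<Sum>x\<leftarrow>take k xs. 2 - int (t x))" for k
  have "(xs = [] \<or> 1 \<le> t u \<and> (\<forall>x\<in>set xs. 1 \<le> t x)) \<and> 2 - int (t u) + S (length xs) = 2"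
    using P tree_degrees_insert_list[OF xs, of t "t u"] unfolding S_def by simp
  then have pos: "\<forall>x\<in>set xs. 1 \<le> t x" and total: "S (length xs) = int (t u)"
    using tu by auto
  have "S (Suc i) \<le> S i + 1" if "i < length xs" for i
  proof -
    have "1 \<le> t (xs ! i)" using pos that by simp
    then show ?thesis using sum_list_take_Suc[OF that, of "\<lambda>x. 2 - int (t x)"] unfolding S_def by simp
  qed
  moreover have "S 0 \<le> 1" "1 \<le> S (length xs)" using total tu unfolding S_def by auto
  ultimately obtain j where j: "j \<le> length xs" "S j = 1"
    using int_upward_steps_hit[of S 1 "length xs"] by blast
  have "0 < j" using j(2) unfolding S_def by (cases j) auto
  moreover have "j < length xs" using j total tu by (cases "j = length xs") auto
  moreover have "tree_degrees (insert u (set (take j xs))) (t(u := 1))"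
  proof -
    have "u \<notin> set (take j xs)" "\<forall>x\<in>set (take j xs). 1 \<le> t x"
      using xs(2) pos by (auto dest: in_set_takeD)
    then show ?thesis
      using tree_degrees_insert_list[OF distinct_take[OF xs(1)]] j(2) unfolding S_def by simp
  qed
  moreover have "tree_degrees (insert u (set (drop j xs))) (t(u := t u - 1))"
  proof -
    have "u \<notin> set (drop j xs)" "\<forall>x\<in>set (drop j xs). 1 \<le> t x"
      using xs(2) pos by (auto dest: in_set_dropD)
    moreover have "2 - int (t u - 1) + (\<Sum>x\<leftarrow>drop j xs. 2 - int (t x)) = 2"
      using sum_list_drop[of "\<lambda>x. 2 - int (t x)" j xs] total j(2) tu unfolding S_def
      by (simp add: of_nat_diff)
    ultimately show ?thesis
      using tree_degrees_insert_list[OF distinct_drop[OF xs(1)]] tu by (simp; arith)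
  qed
  ultimately show ?thesis using that by blast
qed

lemma tree_degrees_split_leaf:
  assumes xs: "distinct xs" "u \<notin> set xs" and P: "tree_degrees (insert u (set xs)) t"
    and tu: "t u = 1"
  obtains k a b where "k < length xs" "a + b + 1 = t (xs ! k)"
    "tree_degrees (insert (xs ! k) (set (take k xs))) (t(xs ! k := a))"
    "tree_degrees (insert (xs ! k) (set (drop (Suc k) xs))) (t(xs ! k := b))"
proof -
  define S where "S k = (\<Sum>x\<leftarrow>take k xs. 2 - int (t x))" for k
  have "tree_degrees (insert u (set xs)) (t(u := 1))" using P tu by (metis fun_upd_triv)
  then have "(xs = [] \<or> (\<forall>x\<in>set xs. 1 \<le> t x)) \<and> S (length xs) = 1"
    using tree_degrees_insert_list[OF xs] unfolding S_def by simp
  moreover have "xs \<noteq> []" using calculation unfolding S_def by auto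
  ultimately have pos: "\<forall>x\<in>set xs. 1 \<le> t x" and total: "S (length xs) = 1" and len: "0 < length xs"
    by auto
  obtain k where k: "k < length xs" "k = 0 \<or> 1 \<le> S k" "Suc k = length xs \<or> S (Suc k) \<le> 0"
    using last_positive_prefix[OF len] by blast
  define q where "q = xs ! k"
  have q: "q \<notin> set (take k xs)" "q \<notin> set (drop (Suc k) xs)"
    using xs(1) k(1) unfolding q_def by (auto simp: in_set_conv_nth nth_eq_iff_index_eq)
  have Sk: "0 \<le> S k" and Sk1: "S (Suc k) \<le> 1"
    using k total unfolding S_def by auto
  have step: "S (Suc k) = S k + (2 - int (t q))"
    unfolding S_def q_def by (rule sum_list_take_Suc[OF k(1)])
  have "nat (S k) + nat (1 - S (Suc k)) + 1 = t q"
    using Sk Sk1 step by simp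
  moreover have "tree_degrees (insert q (set (take k xs))) (t(q := nat (S k)))"
  proof -
    have "take k xs = [] \<or> 1 \<le> nat (S k) \<and> (\<forall>x\<in>set (take k xs). 1 \<le> t x)"
      using k(2) pos by (auto dest: in_set_takeD)
    then show ?thesis
      using tree_degrees_insert_list[OF distinct_take[OF xs(1)] q(1)] Sk unfolding S_def by simp
  qed
  moreover have "tree_degrees (insert q (set (drop (Suc k) xs))) (t(q := nat (1 - S (Suc k))))"
  proof -
    have "drop (Suc k) xs = [] \<or> 1 \<le> nat (1 - S (Suc k)) \<and> (\<forall>x\<in>set (drop (Suc k) xs). 1 \<le> t x)"
      using k(3) pos by (auto dest: in_set_dropD)
    moreover have "2 - int (nat (1 - S (Suc k))) + (\<Sum>x\<leftarrow>drop (Suc k) xs. 2 - int (t x)) = 2"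
      using sum_list_drop[of "\<lambda>x. 2 - int (t x)" "Suc k" xs] total Sk1 unfolding S_def by simp
    ultimately show ?thesis
      using tree_degrees_insert_list[OF distinct_drop[OF xs(1)] q(2)] by simp
  qed
  ultimately show ?thesis using that k(1) unfolding q_def by blast
qed

section \<open>Angular order around the lowest point\<close>

lemma lex_min_exists:
  assumes "finite P" "P \<noteq> {}"
  obtains u where "u \<in> P" "\<forall>q\<in>P - {u}. lex_positive (q - u)"
proof -
  define m1 where "m1 = Min ((\<lambda>q. q$1) ` P)"
  define P1 where "P1 = {q\<in>P. q$1 = m1}"
  have "m1 \<in> (\<lambda>q. q$1) ` P" unfolding m1_def using assms by simp
  then have P1: "finite P1" "P1 \<noteq> {}" unfolding P1_def using assms(1) by auto
  define m2 where "m2 = Min ((\<lambda>q. q$2) ` P1)"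
  have "m2 \<in> (\<lambda>q. q$2) ` P1" unfolding m2_def using P1 by simp
  then obtain u where u: "u \<in> P1" "u$2 = m2" by blast
  have "lex_positive (q - u)" if q: "q \<in> P" "q \<noteq> u" for q
  proof (cases "q$1 = m1")
    case True
    then have "u$2 \<le> q$2" using P1 q(1) u unfolding m2_def P1_def by auto
    moreover have "q$2 \<noteq> u$2"
      using True q(2) u(1) unfolding P1_def by (auto simp: vec_eq_iff forall_2)
    ultimately show ?thesis using True u(1) unfolding lex_positive_def P1_def by simp
  next
    case False
    have "m1 \<le> q$1" unfolding m1_def using assms(1) q(1) by simp
    then have "u$1 < q$1" using False u(1) unfolding P1_def by simp
    then show ?thesis unfolding lex_positive_def by simp
  qed
  then show ?thesis using that u(1) unfolding P1_def by blast
qed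

definition ccw :: "point \<Rightarrow> point \<Rightarrow> point \<Rightarrow> bool" where
  "ccw u a b \<longleftrightarrow> 0 < cross2 (a - u) (b - u)"

lemma angular_order_exists:
  assumes "finite P" "P \<noteq> {}" "general_position P"
  obtains u qs where "u \<in> P" "set qs = P - {u}" "distinct qs"
    "sorted_wrt (ccw u) qs"
proof -
  obtain u where u: "u \<in> P" "\<forall>q\<in>P - {u}. lex_positive (q - u)"
    using lex_min_exists[OF assms(1,2)] by blast
  obtain qs where qs: "set qs = P - {u}" "sorted_wrt (ccw u) qs"
  proof (rule strict_total_order_sorted_list[of "P - {u}" "ccw u"])
    show "finite (P - {u})" using assms(1) by simp
    show "ccw u a c" if "a \<in> P - {u}" "b \<in> P - {u}" "c \<in> P - {u}" "ccw u a b" "ccw u b c" for a b c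
      using cross2_trans u(2) that unfolding ccw_def by blast
    show "ccw u a b \<or> ccw u b a" if "a \<in> P - {u}" "b \<in> P - {u}" "a \<noteq> b" for a b
      using general_position_cross2_nonzero[OF assms(3) u(1), of a b] cross2_antisym[of "a - u" "b - u"] that
      unfolding ccw_def by force
    show "\<not> ccw u a a" for a unfolding ccw_def by simp
  qed
  moreover have "distinct qs"
    using sorted_wrt_irrefl_distinct[OF qs(2)] unfolding ccw_def by simp
  ultimately show ?thesis using that u(1) unfolding ccw_def by blast
qed

lemma sorted_ccw_prefix_suffix_separated:
  assumes sorted: "sorted_wrt (ccw u) qs" and j: "0 < j" "j < length qs"
  obtains d where "\<forall>y\<in>set (take j qs). cross2 d (y - u) < 0" "\<forall>z\<in>set (drop j qs). 0 < cross2 d (z - u)"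
proof -
  define a where "a = qs ! (j - 1)"
  define b where "b = qs ! j"
  have take: "take j qs = take (j - 1) qs @ [a]" and drop: "drop j qs = b # drop (Suc j) qs"
    using j unfolding a_def b_def by (auto simp: take_Suc_conv_app_nth[symmetric] Cons_nth_drop_Suc)
  have "sorted_wrt (ccw u) (take (j - 1) qs @ [a] @ b # drop (Suc j) qs)"
    using sorted take drop by (metis append_take_drop_id append.assoc)
  then have before_a: "\<forall>y\<in>set (take (j - 1) qs). ccw u y a" and a_before_b: "ccw u a b"
    and before_b: "\<forall>y\<in>set (take (j - 1) qs). ccw u y b"
    and after_a: "\<forall>z\<in>set (drop (Suc j) qs). ccw u a z" and after_b: "\<forall>z\<in>set (drop (Suc j) qs). ccw u b z"
    by (auto simp: sorted_wrt_append)
  \<comment> \<open>the bisector of the angle between the last point of the prefix and the first of the suffix\<close>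
  define d where "d = (a - u) + (b - u)"
  have "cross2 d (y - u) < 0" if "y \<in> set (take j qs)" for y
  proof -
    have "y = a \<or> y \<in> set (take (j - 1) qs)" using that unfolding take by auto
    then have "0 \<le> cross2 (y - u) (a - u)" "0 < cross2 (y - u) (b - u)"
      using before_a before_b a_before_b unfolding ccw_def by auto
    then show ?thesis
      unfolding d_def cross2_add_left using cross2_antisym[of "a - u" "y - u"] cross2_antisym[of "b - u" "y - u"]
      by simp
  qed
  moreover have "0 < cross2 d (z - u)" if "z \<in> set (drop j qs)" for z
  proof -
    have "z = b \<or> z \<in> set (drop (Suc j) qs)" using that unfolding drop by auto
    then have "0 < cross2 (a - u) (z - u)" "0 \<le> cross2 (b - u) (z - u)"
      using after_a after_b a_before_b unfolding ccw_def by auto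
    then show ?thesis unfolding d_def cross2_add_left by simp
  qed
  ultimately show ?thesis using that by blast
qed

lemma sorted_ccw_pivot_separated:
  assumes sorted: "sorted_wrt (ccw u) qs" and k: "k < length qs"
  shows "\<forall>y\<in>set (take k qs). cross2 (qs ! k - u) (y - qs ! k) < 0"
    "\<forall>z\<in>set (drop (Suc k) qs). 0 < cross2 (qs ! k - u) (z - qs ! k)"
proof -
  have "sorted_wrt (ccw u) (take k qs @ qs ! k # drop (Suc k) qs)"
    using sorted k by (metis append_take_drop_id Cons_nth_drop_Suc)
  then show "\<forall>y\<in>set (take k qs). cross2 (qs ! k - u) (y - qs ! k) < 0"
    "\<forall>z\<in>set (drop (Suc k) qs). 0 < cross2 (qs ! k - u) (z - qs ! k)"
    by (auto simp: sorted_wrt_append ccw_def cross2_shift_origin cross2_antisym[of "qs ! k - u"])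
qed

section \<open>Plane trees with prescribed degrees\<close>

lemma plane_tree_step_apex:
  assumes gp: "general_position (insert u (set qs))" and qs: "distinct qs" "u \<notin> set qs"
    and ccw: "sorted_wrt (ccw u) qs"
    and t: "tree_degrees (insert u (set qs)) t" "2 \<le> t u"
    and IH: "\<And>Q s. Q \<subset> insert u (set qs) \<Longrightarrow> tree_degrees Q s \<Longrightarrow> \<exists>T. plane_tree_with_degrees Q s T"
  shows "\<exists>T. plane_tree_with_degrees (insert u (set qs)) t T"
proof -
  obtain j where j: "0 < j" "j < length qs"
    and tY: "tree_degrees (insert u (set (take j qs))) (t(u := 1))"
    and tZ: "tree_degrees (insert u (set (drop j qs))) (t(u := t u - 1))"
    using tree_degrees_split_apex[OF qs t] by blast
  obtain d where sepY: "\<forall>y\<in>set (take j qs). cross2 d (y - u) < 0"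
    and sepZ: "\<forall>z\<in>set (drop j qs). 0 < cross2 d (z - u)"
    using sorted_ccw_prefix_suffix_separated[OF ccw j] by blast
  define Y where "Y = insert u (set (take j qs))"
  define Z where "Z = insert u (set (drop j qs))"
  have disj: "set (take j qs) \<inter> set (drop j qs) = {}"
    using qs(1) by (simp add: set_take_disj_set_drop_if_distinct)
  have YZ: "Y \<union> Z = insert u (set qs)" "Y \<inter> Z = {u}"
    unfolding Y_def Z_def using disj qs(2) by (auto simp flip: set_append)
  have "qs ! j \<in> set (drop j qs)" "qs ! 0 \<in> set (take j qs)"
    using j by (auto simp: in_set_conv_nth intro!: exI[of _ 0])
  then have "qs ! j \<notin> Y" "qs ! 0 \<notin> Z"
    unfolding Y_def Z_def using qs(2) j disj by (auto dest: in_set_takeD in_set_dropD)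
  moreover have "qs ! j \<in> set qs" "qs ! 0 \<in> set qs"
    using j(2) by (intro nth_mem; linarith)+
  ultimately have "Y \<subset> insert u (set qs)" "Z \<subset> insert u (set qs)"
    using YZ(1) by blast+
  then obtain TY TZ where "plane_tree_with_degrees Y (t(u := 1)) TY"
    "plane_tree_with_degrees Z (t(u := t u - 1)) TZ"
    using IH[of Y] IH[of Z] tY[folded Y_def] tZ[folded Z_def] by blast
  then have "plane_tree_with_degrees (Y \<union> Z) t (TY \<union> TZ)"
    using t(2) sepY sepZ gp YZ
    by (intro plane_tree_with_degrees_glue[where c = u and d = d]) (auto simp: Y_def Z_def)
  then show ?thesis using YZ(1) by auto
qed

lemma plane_tree_with_degrees_glue_leaf:
  assumes gp: "general_position (insert u (Y \<union> Z))" and fin: "finite Y" "finite Z"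
    and YZ: "Y \<inter> Z = {q}" and u: "u \<notin> Y \<union> Z"
    and TY: "plane_tree_with_degrees Y tY TY" and TZ: "plane_tree_with_degrees Z tZ TZ"
    and sepY: "\<forall>y\<in>Y - {q}. cross2 (q - u) (y - q) < 0"
    and sepZ: "\<forall>z\<in>Z - {q}. 0 < cross2 (q - u) (z - q)"
    and tY: "\<forall>x\<in>Y - {q}. t x = tY x" and tZ: "\<forall>x\<in>Z - {q}. t x = tZ x"
    and tq: "t q = tY q + tZ q + 1" and tu: "t u = 1"
  shows "plane_tree_with_degrees (insert u (Y \<union> Z)) t (insert {u, q} (TY \<union> TZ))"
proof -
  have q: "q \<in> Y" "q \<in> Z" "q \<noteq> u" using YZ u by auto
  have "Y \<union> {u, q} \<subseteq> insert u (Y \<union> Z)" "Z \<union> (Y \<union> {u, q}) \<subseteq> insert u (Y \<union> Z)"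
    using q by auto
  then have gp': "general_position (Y \<union> {u, q})" "general_position (Z \<union> (Y \<union> {u, q}))"
    by (simp_all add: general_position_subset[OF gp])
  have inter: "Y \<inter> {u, q} = {q}" "Z \<inter> (Y \<union> {u, q}) = {q}"
    using YZ u q by auto
  \<comment> \<open>u lies on the line through q and u, so the edge uq is on the closed side in both gluings\<close>
  have YX: "plane_tree_with_degrees (Y \<union> {u, q}) (t(q := tY q + 1)) (TY \<union> {{u, q}})"
  proof (rule plane_tree_with_degrees_glue[OF gp'(1) fin(1) _ inter(1) TY
        plane_tree_with_degrees_edge[OF q(3)[symmetric]] sepY])
    show "\<forall>x\<in>{u, q}. 0 \<le> cross2 (q - u) (x - q)"
      unfolding cross2_def by (simp add: algebra_simps)
  qed (use tY tu q(3) in auto)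
  have "plane_tree_with_degrees (Z \<union> (Y \<union> {u, q})) t (TZ \<union> (TY \<union> {{u, q}}))"
  proof (rule plane_tree_with_degrees_glue[OF gp'(2) fin(2) _ inter(2) TZ YX])
    show "\<forall>z\<in>Z - {q}. cross2 (u - q) (z - q) < 0"
      using sepZ by (simp add: cross2_diff_commute[of u q])
    show "\<forall>x\<in>Y \<union> {u, q}. 0 \<le> cross2 (u - q) (x - q)"
    proof
      fix x assume "x \<in> Y \<union> {u, q}"
      then consider "x \<in> Y - {q}" | "x = q" | "x = u" by blast
      then show "0 \<le> cross2 (u - q) (x - q)"
      proof cases
        case 1
        then show ?thesis using sepY by (simp add: cross2_diff_commute[of u q] less_imp_le)
      qed simp_all
    qed
  qed (use tZ tq fin in auto)
  moreover have "Z \<union> (Y \<union> {u, q}) = insert u (Y \<union> Z)" using q by auto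
  moreover have "TZ \<union> (TY \<union> {{u, q}}) = insert {u, q} (TY \<union> TZ)" by auto
  ultimately show ?thesis by simp
qed

lemma plane_tree_step_leaf:
  assumes gp: "general_position (insert u (set qs))" and qs: "distinct qs" "u \<notin> set qs"
    and ccw: "sorted_wrt (ccw u) qs"
    and t: "tree_degrees (insert u (set qs)) t" "t u = 1"
    and IH: "\<And>Q s. Q \<subset> insert u (set qs) \<Longrightarrow> tree_degrees Q s \<Longrightarrow> \<exists>T. plane_tree_with_degrees Q s T"
  shows "\<exists>T. plane_tree_with_degrees (insert u (set qs)) t T"
proof -
  obtain k a b where k: "k < length qs" and ab: "a + b + 1 = t (qs ! k)"
    and tY: "tree_degrees (insert (qs ! k) (set (take k qs))) (t(qs ! k := a))"
    and tZ: "tree_degrees (insert (qs ! k) (set (drop (Suc k) qs))) (t(qs ! k := b))"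
    using tree_degrees_split_leaf[OF qs t] by blast
  define q where "q = qs ! k"
  define Y where "Y = insert q (set (take k qs))"
  define Z where "Z = insert q (set (drop (Suc k) qs))"
  have "set qs = insert q (set (take k qs) \<union> set (drop (Suc k) qs))"
    using k unfolding q_def by (metis Cons_nth_drop_Suc append_take_drop_id set_append Un_insert_right list.simps(15))
  then have YZ_qs: "Y \<union> Z = set qs" unfolding Y_def Z_def by auto
  then have P: "insert u (set qs) = insert u (Y \<union> Z)" by simp
  have "set (take k qs) \<inter> set (drop (Suc k) qs) = {}" "q \<notin> set (take k qs)" "q \<notin> set (drop (Suc k) qs)"
    using qs(1) k unfolding q_def
    by (auto simp: set_take_disj_set_drop_if_distinct in_set_conv_nth nth_eq_iff_index_eq)
  then have YZ: "Y \<inter> Z = {q}" unfolding Y_def Z_def by auto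
  have u: "u \<notin> Y \<union> Z" using qs(2) YZ_qs by simp
  then have "Y \<subset> insert u (set qs)" "Z \<subset> insert u (set qs)" unfolding P by auto
  then obtain TY TZ where "plane_tree_with_degrees Y (t(q := a)) TY"
    "plane_tree_with_degrees Z (t(q := b)) TZ"
    using IH[of Y] IH[of Z] tY[folded q_def, folded Y_def] tZ[folded q_def, folded Z_def] by blast
  moreover have "\<forall>y\<in>Y - {q}. cross2 (q - u) (y - q) < 0" "\<forall>z\<in>Z - {q}. 0 < cross2 (q - u) (z - q)"
    using sorted_ccw_pivot_separated[OF ccw k] unfolding Y_def Z_def q_def by auto
  ultimately have "plane_tree_with_degrees (insert u (Y \<union> Z)) t (insert {u, q} (TY \<union> TZ))"
    using gp YZ u ab t(2) unfolding P q_def[symmetric]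
    by (intro plane_tree_with_degrees_glue_leaf) (auto simp: Y_def Z_def)
  then show ?thesis unfolding P by blast
qed

lemma plane_tree_with_degrees_exists:
  assumes "finite P" "general_position P" "tree_degrees P t"
  shows "\<exists>T. plane_tree_with_degrees P t T"
  using assms
proof (induction P arbitrary: t rule: finite_psubset_induct)
  case (psubset P)
  have "P \<noteq> {}" using psubset.prems(2) unfolding tree_degrees_def by auto
  then obtain u qs where u: "u \<in> P" and qs: "set qs = P - {u}" "distinct qs"
    and ccw: "sorted_wrt (ccw u) qs"
    using angular_order_exists[OF psubset.hyps(1) _ psubset.prems(1)] by blast
  have P: "P = insert u (set qs)" and u_qs: "u \<notin> set qs" using u qs(1) by auto
  note gp = psubset.prems(1)[unfolded P] and t = psubset.prems(2)[unfolded P]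
  have IH: "\<exists>T. plane_tree_with_degrees Q s T" if "Q \<subset> insert u (set qs)" "tree_degrees Q s" for Q s
    using psubset.IH[of Q s] general_position_subset[OF psubset.prems(1), of Q] that P by auto
  consider "t u = 0" | "t u = 1" | "2 \<le> t u" by linarith
  then show ?case
  proof cases
    case 1
    have "tree_degrees (insert u (set qs)) (t(u := 0))" using t 1 by (metis fun_upd_triv)
    then have "qs = []" using tree_degrees_insert_list[OF qs(2) u_qs] by simp
    then have "plane_tree_with_degrees P t {}"
      using 1 P is_tree_singleton unfolding plane_tree_with_degrees_def non_crossing_def degree_def by simp
    then show ?thesis by blast
  next
    case 2
    show ?thesis using plane_tree_step_leaf[OF gp qs(2) u_qs ccw t 2 IH] P by simp
  next
    case 3
    show ?thesis using plane_tree_step_apex[OF gp qs(2) u_qs ccw t 3 IH] P by simp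
  qed
qed

lemma tree_degrees_inner_and_leaves:
  assumes "finite R" "finite B" "R \<inter> B = {}" "2 \<le> card B" "sum g R = card B - 2"
  shows "tree_degrees (R \<union> B) (\<lambda>x. if x \<in> R then g x + 2 else 1)"
proof -
  have "(\<Sum>x\<in>B. 2 - int (if x \<in> R then g x + 2 else 1)) = (\<Sum>x\<in>B. 1)"
    using assms(3) by (intro sum.cong) auto
  then have "(\<Sum>x\<in>R \<union> B. 2 - int (if x \<in> R then g x + 2 else 1)) = - int (sum g R) + int (card B)"
    using assms(1-3) by (simp add: sum.union_disjoint sum_negf)
  also have "\<dots> = 2" using assms(4,5) by (simp add: of_nat_diff)
  finally show ?thesis unfolding tree_degrees_def by auto
qed

theorem theorem1:
  fixes R B :: "point set" and f :: "point \<Rightarrow> nat"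
  assumes "finite R" and "finite B" and "R \<inter> B = {}"
    and "general_position (R \<union> B)"
    and "\<forall>x\<in>R. f x \<ge> 2"
    and "2 \<le> card B" and "card B \<le> (\<Sum>x\<in>R. (f x - 2)) + 2"
  shows "\<exists>T. is_tree (R \<union> B) T \<and> non_crossing T
            \<and> {v \<in> R \<union> B. degree T v = 1} = B
            \<and> (\<forall>x\<in>R. 2 \<le> degree T x \<and> degree T x \<le> f x)
            \<and> (card B = (\<Sum>x\<in>R. (f x - 2)) + 2 \<longrightarrow> (\<forall>x\<in>R. degree T x = f x))"
proof -
  have "card B - 2 \<le> (\<Sum>x\<in>R. f x - 2)" using assms(7) by linarith
  then obtain g where g: "\<forall>x\<in>R. g x \<le> f x - 2" "sum g R = card B - 2"
    by (rule exists_le_sum_eq[OF assms(1)])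
  obtain T where T: "plane_tree_with_degrees (R \<union> B) (\<lambda>x. if x \<in> R then g x + 2 else 1) T"
    using plane_tree_with_degrees_exists[OF _ assms(4) tree_degrees_inner_and_leaves[OF assms(1-3,6) g(2)]]
      assms(1,2) by blast
  then have deg: "\<forall>x\<in>R. degree T x = g x + 2" "\<forall>x\<in>B. degree T x = 1"
    using assms(3) unfolding plane_tree_with_degrees_def by auto
  have "{v \<in> R \<union> B. degree T v = 1} = B" using deg by auto
  moreover have "\<forall>x\<in>R. 2 \<le> degree T x \<and> degree T x \<le> f x"
    using deg(1) g(1) assms(5) by (simp add: le_diff_conv2)
  moreover have "degree T x = f x" if "card B = (\<Sum>x\<in>R. (f x - 2)) + 2" "x \<in> R" for x
  proof -
    have "g x = f x - 2"
      using sum_mono_inv[of g R "\<lambda>x. f x - 2"] g that assms(1) by simp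
    moreover have "2 \<le> f x" using assms(5) that(2) by blast
    ultimately show ?thesis using deg(1) that(2) by simp
  qed
  ultimately show ?thesis using T unfolding plane_tree_with_degrees_def by blast
qed

end
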